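(* For every sequence of digits in $D$ and every $n\ge1$: (1) $p_n/q_n$ lies between $p_n'/q_n'$ and $p_n''/q_n''$; (2) $p_{n-1}/q_{n-1}$ does not lie between $p_n'/q_n'$ and $p_n''/q_n''$; (3) the three numbers $p_n/q_n$, $p_n'/q_n'$, $p_n''/q_n''$ are distinct and all lie in the half-open interval $I_{n-1}$ with endpoints $p_{n-1}/q_{n-1}$ and $p_{n-1}''/q_{n-1}''$ that contains $p_{n-1}''/q_{n-1}''$ but not $p_{n-1}/q_{n-1}$.
   Context: Admissible digits: $D=\{(1,1)\}\cup\{(a,\varepsilon): a\in\mathbb Z,\ a\ge2,\ \varepsilon\in\{-1,1\}\}$. Fix digits $(a_1,\varepsilon_1),(a_2,\varepsilon_2),\dots\in D$. For $n\ge1$, with $M=\begin{pmatrix}1&-1\\1&0\end{pmatrix}$, $J=\begin{pmatrix}2&-1\\1&0\end{pmatrix}$, $E(a,\varepsilon)=\begin{pmatrix}a&\varepsilon\\1&0\end{pmatrix}$, define integers by $M E(a_1,\varepsilon_1) J\cdots J E(a_n,\varepsilon_n) J=\begin{pmatrix}p_n&-p_n'\\ q_n&-q_n'\end{pmatrix}$ and $\begin{pmatrix}p_n''\\ q_n''\end{pmatrix}=M E(a_1,\varepsilon_1) J\cdots J E(a_n,\varepsilon_n)\begin{pmatrix}1\\1\end{pmatrix}$; set $p_0=q_0=1$, $p_0''=0$, $q_0''=1$. Then $p_n/q_n$, $p_n'/q_n'$, $p_n''/q_n''$ equal the finite continued fraction $1-\cfrac{1}{a_1+\cfrac{\varepsilon_1}{2-\cfrac{1}{\ddots\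 \cfrac{\varepsilon_{n-1}}{2-\cfrac{1}{c}}}}}$ with last term $c=a_n+\varepsilon_n/2$, $c=a_n$, $c=a_n+\varepsilon_n$ respectively (principal, sub-, pseudo-convergents); all $q$'s are positive. *)

theory Defs
  imports Complex_Main
begin

text \<open>2x2 integer matrices (m11, m12, m21, m22).\<close>
type_synonym mat2 = "int \<times> int \<times> int \<times> int"

fun mmul :: "mat2 \<Rightarrow> mat2 \<Rightarrow> mat2" where
  "mmul (a,b,c,d) (e,f,g,h) = (a*e + b*g, a*f + b*h, c*e + d*g, c*f + d*h)"

definition Mmat :: mat2 where "Mmat = (1, -1, 1, 0)"
definition Jmat :: mat2 where "Jmat = (2, -1, 1, 0)"
definition Emat :: "int \<Rightarrow> int \<Rightarrow> mat2" where "Emat a e = (a, e, 1, 0)"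

definition admissible :: "int \<times> int \<Rightarrow> bool" where
  "admissible d \<longleftrightarrow> d = (1,1) \<or> (fst d \<ge> 2 \<and> (snd d = -1 \<or> snd d = 1))"

text \<open>Digit sequences are indexed from 1: digit k is (a k, e k), k \<ge> 1.
  prodM a e n = M E(a1,e1) J ... J E(an,en) J  (prodM a e 0 = M).\<close>
fun prodM :: "(nat \<Rightarrow> int) \<Rightarrow> (nat \<Rightarrow> int) \<Rightarrow> nat \<Rightarrow> mat2" where
  "prodM a e 0 = Mmat"
| "prodM a e (Suc n) = mmul (mmul (prodM a e n) (Emat (a (Suc n)) (e (Suc n)))) Jmat"

definition pp :: "(nat \<Rightarrow> int) \<Rightarrow> (nat \<Rightarrow> int) \<Rightarrow> nat \<Rightarrow> int" where
  "pp a e n = (if n = 0 then 1 else (case prodM a e n of (m11,m12,m21,m22) \<Rightarrow> m11))"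
definition qq :: "(nat \<Rightarrow> int) \<Rightarrow> (nat \<Rightarrow> int) \<Rightarrow> nat \<Rightarrow> int" where
  "qq a e n = (if n = 0 then 1 else (case prodM a e n of (m11,m12,m21,m22) \<Rightarrow> m21))"
text \<open>sub-convergents (defined for n \<ge> 1)\<close>
definition pp' :: "(nat \<Rightarrow> int) \<Rightarrow> (nat \<Rightarrow> int) \<Rightarrow> nat \<Rightarrow> int" where
  "pp' a e n = (case prodM a e n of (m11,m12,m21,m22) \<Rightarrow> - m12)"
definition qq' :: "(nat \<Rightarrow> int) \<Rightarrow> (nat \<Rightarrow> int) \<Rightarrow> nat \<Rightarrow> int" where
  "qq' a e n = (case prodM a e n of (m11,m12,m21,m22) \<Rightarrow> - m22)"
text \<open>pseudo-convergents: M E1 J ... J En (1,1)^T for n \<ge> 1; p''_0 = 0, q''_0 = 1\<close>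
definition pp'' :: "(nat \<Rightarrow> int) \<Rightarrow> (nat \<Rightarrow> int) \<Rightarrow> nat \<Rightarrow> int" where
  "pp'' a e n = (if n = 0 then 0 else
     (case mmul (prodM a e (n-1)) (Emat (a n) (e n)) of (m11,m12,m21,m22) \<Rightarrow> m11 + m12))"
definition qq'' :: "(nat \<Rightarrow> int) \<Rightarrow> (nat \<Rightarrow> int) \<Rightarrow> nat \<Rightarrow> int" where
  "qq'' a e n = (if n = 0 then 1 else
     (case mmul (prodM a e (n-1)) (Emat (a n) (e n)) of (m11,m12,m21,m22) \<Rightarrow> m21 + m22))"

definition between :: "real \<Rightarrow> real \<Rightarrow> real \<Rightarrow> bool" where
  "between x u v \<longleftrightarrow> min u v \<le> x \<and> x \<le> max u v"

definition halfopen :: "real \<Rightarrow> real \<Rightarrow> real set" where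
  "halfopen u v = {x. (u < v \<and> u < x \<and> x \<le> v) \<or> (v < u \<and> v \<le> x \<and> x < u)}"

end

theory Submission
  imports Defs
begin

text \<open>Let X = (x11, x12, x21, x22) be the matrix product of step n - 1 and
  f t = (t x11 + x12) / (t x21 + x22). The three convergents of step n are f (a + e/2), f a and
  f (a + e), while the endpoints of the interval of step n - 1 are x11 / x21 (the value at
  infinity) and f 1. Along the digit products the denominator of f stays positive on [1, \<infinity>) and
  the determinant of X stays nonzero, so f is strictly monotone on [1, \<infinity>) and never attains
  its value at infinity. All claims then follow from the order of the parameters
  1 \<le> a, a + e/2, a + e < \<infinity>, where a + e/2 lies strictly between a and a + e.\<close>

definition det2 :: "mat2 \<Rightarrow> int" where
  "det2 = (\<lambda>(x11, x12, x21, x22). x11 * x22 - x12 * x21)"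

definition moebius :: "mat2 \<Rightarrow> real \<Rightarrow> real" where
  "moebius = (\<lambda>(x11, x12, x21, x22) t. (t * x11 + x12) / (t * x21 + x22))"

lemma det2_mmul: "det2 (mmul X Y) = det2 X * det2 Y"
  by (cases X, cases Y) (simp add: det2_def algebra_simps)

lemma admissible_cases:
  assumes "admissible (a, e)"
  shows "(a = 1 \<and> e = 1) \<or> (a \<ge> 2 \<and> (e = 1 \<or> e = -1))"
  using assms by (auto simp: admissible_def)

lemma det2_prodM_nonzero:
  assumes "\<And>k. k \<ge> 1 \<Longrightarrow> admissible (a k, e k)"
  shows "det2 (prodM a e n) \<noteq> 0"
proof (induction n)
  case 0
  show ?case by (simp add: det2_def Mmat_def)
next
  case (Suc n)
  have "e (Suc n) \<noteq> 0"
    using admissible_cases[OF assms[of "Suc n"]] by auto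
  moreover have "det2 (Emat (a (Suc n)) (e (Suc n))) = - e (Suc n)" "det2 Jmat = 1"
    by (simp_all add: det2_def Emat_def Jmat_def)
  ultimately show ?case
    using Suc.IH by (simp add: det2_mmul)
qed

lemma lower_row_pos:
  fixes t :: "'a :: linordered_idom"
  assumes "0 < x21" "0 < x21 + x22" "1 \<le> t"
  shows "0 < t * x21 + x22"
proof -
  have "0 \<le> (t - 1) * x21"
    using assms by simp
  then show ?thesis
    using assms(2) by (simp add: algebra_simps)
qed

text \<open>The lower row of the step matrix is (2 c + e y21, - c) with c = a y21 + y22, so its entry sum
  is (a + e) y21 + y22; both quantities are positive because a, a + e \<ge> 1.\<close>
lemma prodM_lower_row_pos:
  assumes "\<And>k. k \<ge> 1 \<Longrightarrow> admissible (a k, e k)"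
    and "prodM a e n = (x11, x12, x21, x22)"
  shows "0 < x21 \<and> 0 < x21 + x22"
  using assms(2)
proof (induction n arbitrary: x11 x12 x21 x22)
  case 0
  then show ?case by (simp add: Mmat_def)
next
  case (Suc n)
  obtain y11 y12 y21 y22 where P: "prodM a e n = (y11, y12, y21, y22)"
    by (cases "prodM a e n") auto
  have IH: "0 < y21" "0 < y21 + y22"
    using Suc.IH[OF P] by auto
  define A where "A = a (Suc n)"
  define E where "E = e (Suc n)"
  have "A \<ge> 1" "A + E \<ge> 1"
    using admissible_cases[OF assms(1)[of "Suc n"]] by (auto simp: A_def E_def)
  then have "0 < A * y21 + y22" "0 < (A + E) * y21 + y22"
    using lower_row_pos[OF IH] by blast+
  moreover have "x21 = (A * y21 + y22) + ((A + E) * y21 + y22)" "x21 + x22 = (A + E) * y21 + y22"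
    using Suc.prems P by (auto simp: Emat_def Jmat_def A_def E_def algebra_simps)
  ultimately show ?case by simp
qed

lemma moebius_less_moebius_iff:
  assumes "0 < x21" "0 < x21 + x22" "1 \<le> t1" "1 \<le> t2"
  shows "moebius (x11, x12, x21, x22) t1 < moebius (x11, x12, x21, x22) t2
    \<longleftrightarrow> 0 < (t2 - t1) * det2 (x11, x12, x21, x22)"
proof -
  have pos1: "0 < t1 * x21 + x22" and pos2: "0 < t2 * x21 + x22"
    using lower_row_pos[of "real_of_int x21" "real_of_int x22"] assms by auto
  have "moebius (x11, x12, x21, x22) t1 < moebius (x11, x12, x21, x22) t2
      \<longleftrightarrow> 0 < moebius (x11, x12, x21, x22) t2 - moebius (x11, x12, x21, x22) t1"
    by simp
  also have "\<dots> \<longleftrightarrow>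
      0 < (t2 - t1) * det2 (x11, x12, x21, x22) / ((t1 * x21 + x22) * (t2 * x21 + x22))"
    using pos1 pos2 by (simp add: moebius_def det2_def divide_simps) (simp add: algebra_simps)
  also have "\<dots> \<longleftrightarrow> 0 < (t2 - t1) * det2 (x11, x12, x21, x22)"
    using mult_pos_pos[OF pos1 pos2] by (auto simp: zero_less_divide_iff)
  finally show ?thesis .
qed

lemma moebius_vs_infinity:
  assumes "0 < x21" "0 < x21 + x22" "1 \<le> t"
  shows "moebius (x11, x12, x21, x22) t < x11 / x21 \<longleftrightarrow> 0 < det2 (x11, x12, x21, x22)"
    and "x11 / x21 < moebius (x11, x12, x21, x22) t \<longleftrightarrow> det2 (x11, x12, x21, x22) < 0"
proof -
  have den: "0 < t * x21 + x22"
    using lower_row_pos[of "real_of_int x21" "real_of_int x22"] assms by auto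
  then have pos: "0 < (t * x21 + x22) * x21"
    using assms(1) by simp
  have diff: "moebius (x11, x12, x21, x22) t - x11 / x21
      = - det2 (x11, x12, x21, x22) / ((t * x21 + x22) * x21)"
    using den assms(1) by (simp add: moebius_def det2_def divide_simps) (simp add: algebra_simps)
  have "moebius (x11, x12, x21, x22) t < x11 / x21
      \<longleftrightarrow> moebius (x11, x12, x21, x22) t - x11 / x21 < 0"
    by simp
  also have "\<dots> \<longleftrightarrow> 0 < det2 (x11, x12, x21, x22)"
    unfolding diff using pos by (auto simp: divide_less_0_iff zero_less_divide_iff)
  finally show "moebius (x11, x12, x21, x22) t < x11 / x21 \<longleftrightarrow> 0 < det2 (x11, x12, x21, x22)" .
  have "x11 / x21 < moebius (x11, x12, x21, x22) t
      \<longleftrightarrow> 0 < moebius (x11, x12, x21, x22) t - x11 / x21"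
    by simp
  also have "\<dots> \<longleftrightarrow> det2 (x11, x12, x21, x22) < 0"
    unfolding diff using pos by (auto simp: divide_less_0_iff zero_less_divide_iff)
  finally show "x11 / x21 < moebius (x11, x12, x21, x22) t \<longleftrightarrow> det2 (x11, x12, x21, x22) < 0" .
qed

lemma between_halfopen_of_order:
  fixes u v w s x :: real
  assumes "(u < v \<and> v < w) \<or> (w < v \<and> v < u)"
    and "(x \<le> u \<and> x \<le> w \<and> u < s \<and> w < s \<and> v < s \<and> x < s)
       \<or> (u \<le> x \<and> w \<le> x \<and> s < u \<and> s < w \<and> s < v \<and> s < x)"
  shows "between v u w \<and> \<not> between s u w \<and> v \<noteq> u \<and> v \<noteq> w \<and> u \<noteq> w
    \<and> v \<in> halfopen s x \<and> u \<in> halfopen s x \<and> w \<in> halfopen s x"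
  using assms unfolding between_def halfopen_def by (auto simp: min_def max_def)

lemma moebius_digit_configuration:
  fixes X :: mat2 and A E :: int
  assumes X: "X = (x11, x12, x21, x22)" "0 < x21" "0 < x21 + x22" "det2 X \<noteq> 0"
    and digit: "admissible (A, E)"
  defines "f \<equiv> moebius X" and "s \<equiv> real_of_int x11 / x21"
  shows "between (f (A + E / 2)) (f A) (f (A + E)) \<and> \<not> between s (f A) (f (A + E))
    \<and> f (A + E / 2) \<noteq> f A \<and> f (A + E / 2) \<noteq> f (A + E) \<and> f A \<noteq> f (A + E)
    \<and> f (A + E / 2) \<in> halfopen s (f 1) \<and> f A \<in> halfopen s (f 1) \<and> f (A + E) \<in> halfopen s (f 1)"
proof (rule between_halfopen_of_order)
  have digit': "(A = 1 \<and> E = 1) \<or> (A \<ge> 2 \<and> (E = 1 \<or> E = -1))"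
    using admissible_cases[OF digit] .
  then have ge1: "1 \<le> real_of_int A" "1 \<le> real_of_int A + E / 2" "1 \<le> real_of_int A + E"
    by auto
  note less_iff = moebius_less_moebius_iff[OF X(2,3), of _ _ x11 x12, folded X(1) f_def]
  note infinity_iff = moebius_vs_infinity[OF X(2,3), of _ x11 x12, folded X(1) f_def s_def]
  show "(f A < f (A + E / 2) \<and> f (A + E / 2) < f (A + E))
      \<or> (f (A + E) < f (A + E / 2) \<and> f (A + E / 2) < f A)"
    using digit' X(4) ge1 less_iff[of A "A + E / 2"] less_iff[of "A + E / 2" "A + E"]
      less_iff[of "A + E" "A + E / 2"] less_iff[of "A + E / 2" A]
    by (auto simp: zero_less_mult_iff)
  show "(f 1 \<le> f A \<and> f 1 \<le> f (A + E) \<and> f A < s \<and> f (A + E) < s \<and> f (A + E / 2) < s \<and> f 1 < s)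
      \<or> (f A \<le> f 1 \<and> f (A + E) \<le> f 1 \<and> s < f A \<and> s < f (A + E) \<and> s < f (A + E / 2) \<and> s < f 1)"
    using X(4) ge1 less_iff[of A 1] less_iff[of "A + E" 1] less_iff[of 1 A] less_iff[of 1 "A + E"]
      infinity_iff[of A] infinity_iff[of "A + E"] infinity_iff[of "A + E / 2"] infinity_iff[of 1]
    by (cases "0 < det2 X") (auto simp: not_less zero_less_mult_iff mult_less_0_iff)
qed

text \<open>Right multiplication by J preserves row sums.\<close>
lemma pseudo_convergent_row_sums:
  assumes "prodM a e m = (x11, x12, x21, x22)"
  shows "pp'' a e m = x11 + x12 \<and> qq'' a e m = x21 + x22"
proof (cases m)
  case 0
  then show ?thesis using assms by (simp add: pp''_def qq''_def Mmat_def)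
next
  case (Suc k)
  obtain y11 y12 y21 y22
    where Y: "mmul (prodM a e k) (Emat (a m) (e m)) = (y11, y12, y21, y22)"
    by (cases "mmul (prodM a e k) (Emat (a m) (e m))") auto
  have "prodM a e m = mmul (y11, y12, y21, y22) Jmat"
    using Suc Y by simp
  then show ?thesis
    using assms Suc Y by (simp add: pp''_def qq''_def Jmat_def)
qed

lemma convergents_as_moebius:
  assumes "prodM a e m = (x11, x12, x21, x22)"
  defines "A \<equiv> real_of_int (a (Suc m))" and "E \<equiv> real_of_int (e (Suc m))"
  shows "pp a e (Suc m) / qq a e (Suc m) = moebius (prodM a e m) (A + E / 2)"
    and "pp' a e (Suc m) / qq' a e (Suc m) = moebius (prodM a e m) A"
    and "pp'' a e (Suc m) / qq'' a e (Suc m) = moebius (prodM a e m) (A + E)"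
    and "pp a e m / qq a e m = x11 / x21"
    and "pp'' a e m / qq'' a e m = moebius (prodM a e m) 1"
proof -
  have "moebius (prodM a e m) (A + E / 2)
      = (2 * ((A + E / 2) * x11 + x12)) / (2 * ((A + E / 2) * x21 + x22))"
    using assms(1) by (simp add: moebius_def del: distrib_left_numeral)
  also have "\<dots> = pp a e (Suc m) / qq a e (Suc m)"
    using assms(1) unfolding A_def E_def
    by (simp add: pp_def qq_def Emat_def Jmat_def algebra_simps)
  finally show "pp a e (Suc m) / qq a e (Suc m) = moebius (prodM a e m) (A + E / 2)" ..
  show "pp' a e (Suc m) / qq' a e (Suc m) = moebius (prodM a e m) A"
    using assms(1) unfolding A_def E_def
    by (simp add: pp'_def qq'_def moebius_def Emat_def Jmat_def algebra_simps)
  show "pp'' a e (Suc m) / qq'' a e (Suc m) = moebius (prodM a e m) (A + E)"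
    using assms(1) unfolding A_def E_def
    by (simp add: pp''_def qq''_def moebius_def Emat_def algebra_simps)
  show "pp a e m / qq a e m = x11 / x21"
    using assms(1) by (cases m) (auto simp: pp_def qq_def Mmat_def)
  show "pp'' a e m / qq'' a e m = moebius (prodM a e m) 1"
    using pseudo_convergent_row_sums[OF assms(1)] assms(1) by (simp add: moebius_def)
qed

theorem lemma3p6:
  fixes a e :: "nat \<Rightarrow> int" and n :: nat
  assumes "\<And>k. k \<ge> 1 \<Longrightarrow> admissible (a k, e k)"
    and "n \<ge> 1"
  defines "r \<equiv> of_int (pp a e n) / of_int (qq a e n) :: real"
    and "r' \<equiv> of_int (pp' a e n) / of_int (qq' a e n) :: real"
    and "r'' \<equiv> of_int (pp'' a e n) / of_int (qq'' a e n) :: real"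
    and "s \<equiv> of_int (pp a e (n-1)) / of_int (qq a e (n-1)) :: real"
    and "s'' \<equiv> of_int (pp'' a e (n-1)) / of_int (qq'' a e (n-1)) :: real"
  shows "between r r' r''
    \<and> \<not> between s r' r''
    \<and> r \<noteq> r' \<and> r \<noteq> r'' \<and> r' \<noteq> r''
    \<and> r \<in> halfopen s s'' \<and> r' \<in> halfopen s s'' \<and> r'' \<in> halfopen s s''"
proof -
  obtain m where n: "n = Suc m"
    using assms(2) by (cases n) auto
  obtain x11 x12 x21 x22 where X: "prodM a e m = (x11, x12, x21, x22)"
    by (cases "prodM a e m") auto
  have "0 < x21 \<and> 0 < x21 + x22"
    using prodM_lower_row_pos[OF assms(1) X] .
  moreover have "det2 (prodM a e m) \<noteq> 0"
    using det2_prodM_nonzero[OF assms(1)] .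
  moreover have "admissible (a n, e n)"
    using assms(1,2) .
  ultimately show ?thesis
    using moebius_digit_configuration[OF X] convergents_as_moebius[OF X]
    unfolding r_def r'_def r''_def s_def s''_def n by simp
qed

end
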